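(* Let $(X,T)$ be a Cantor minimal system and let $\Theta:E(X,T)\to K^0(X,T)$ be the injective homomorphism given by $\Theta(\theta)=\lfloor\theta\rfloor[1_X]+[1_{U_{\{\theta\}}}]$, where for $t\in[0,1)\cap E(X,T)$, $U_t$ is a clopen set with $1_{U_t}-t\mathbf 1$ a real coboundary. Then the quotient group $K^0(X,T)/\Theta(E(X,T))$ is torsion-free.
   Context: A Cantor minimal system is a homeomorphism $T$ of a Cantor set $X$ with all orbits dense. $E(X,T)=\{\theta\in\mathbb R:\exp(2\pi i\theta)\text{ is a continuous eigenvalue of } T\}$, where $\lambda$ is a continuous eigenvalue if $f\circ T=\lambda f$ for some continuous $f:X\to\mathbb S^1$. A real coboundary is $F-F\circ T$ with $F\in C(X,\mathbb R)$; such clopen sets $U_t$ exist ($U_0=\emptyset$), and $\Theta$ does not depend on their choice. $\{\theta\}=\theta-\lfloor\theta\rfloor$. $K^0(X,T)=C(X,\mathbb Z)/\{f-f\circ T:f\in C(X,\mathbb Z)\}$, $[f]$ the class of $f$. *)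

theory Defs
  imports "HOL-Analysis.Analysis"
begin

definition cantor_set :: "'a::metric_space set \<Rightarrow> bool" where
  "cantor_set X \<longleftrightarrow> X \<noteq> {} \<and> compact X \<and> (\<forall>x\<in>X. x islimpt X) \<and>
     (\<forall>C. C \<subseteq> X \<longrightarrow> connected C \<longrightarrow> (\<forall>x\<in>C. \<forall>y\<in>C. x = y))"

text \<open>Full orbit of x under the homeomorphism T (with inverse S).\<close>
definition full_orbit :: "('a \<Rightarrow> 'a) \<Rightarrow> ('a \<Rightarrow> 'a) \<Rightarrow> 'a \<Rightarrow> 'a set" where
  "full_orbit T S x = {(T ^^ n) x | n. True} \<union> {(S ^^ n) x | n. True}"

definition cantor_minimal_system :: "'a::metric_space set \<Rightarrow> ('a \<Rightarrow> 'a) \<Rightarrow> bool" where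
  "cantor_minimal_system X T \<longleftrightarrow> cantor_set X \<and>
     (\<exists>S. homeomorphism X X T S \<and> (\<forall>x\<in>X. X \<subseteq> closure (full_orbit T S x)))"

definition continuous_eigenvalue :: "'a::metric_space set \<Rightarrow> ('a \<Rightarrow> 'a) \<Rightarrow> complex \<Rightarrow> bool" where
  "continuous_eigenvalue X T lam \<longleftrightarrow>
     (\<exists>f :: 'a \<Rightarrow> complex. continuous_on X f \<and> f ` X \<subseteq> sphere 0 1 \<and>
        (\<forall>x\<in>X. f (T x) = lam * f x))"

definition eigen_group :: "'a::metric_space set \<Rightarrow> ('a \<Rightarrow> 'a) \<Rightarrow> real set" where
  "eigen_group X T = {\<theta>. continuous_eigenvalue X T (exp (2 * of_real pi * \<i> * of_real \<theta>))}"

definition int_cont :: "'a::metric_space set \<Rightarrow> ('a \<Rightarrow> int) \<Rightarrow> bool" where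
  "int_cont X f \<longleftrightarrow> continuous_on X (\<lambda>x. real_of_int (f x))"

definition int_coboundary :: "'a::metric_space set \<Rightarrow> ('a \<Rightarrow> 'a) \<Rightarrow> ('a \<Rightarrow> int) \<Rightarrow> bool" where
  "int_coboundary X T g \<longleftrightarrow> (\<exists>f. int_cont X f \<and> (\<forall>x\<in>X. g x = f x - f (T x)))"

definition real_coboundary :: "'a::metric_space set \<Rightarrow> ('a \<Rightarrow> 'a) \<Rightarrow> ('a \<Rightarrow> real) \<Rightarrow> bool" where
  "real_coboundary X T g \<longleftrightarrow> (\<exists>F. continuous_on X F \<and> (\<forall>x\<in>X. g x = F x - F (T x)))"

text \<open>Equality of classes in K^0(X,T): [f] = [g].\<close>
definition K0_eq :: "'a::metric_space set \<Rightarrow> ('a \<Rightarrow> 'a) \<Rightarrow> ('a \<Rightarrow> int) \<Rightarrow> ('a \<Rightarrow> int) \<Rightarrow> bool" where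
  "K0_eq X T f g \<longleftrightarrow> int_coboundary X T (\<lambda>x. f x - g x)"

definition clopen_in :: "'a::metric_space set \<Rightarrow> 'a set \<Rightarrow> bool" where
  "clopen_in X U \<longleftrightarrow> openin (top_of_set X) U \<and> closedin (top_of_set X) U"

text \<open>The class [f] lies in Theta(E(X,T)): [f] = floor(theta)[1_X] + [1_U] for some
  theta in E(X,T) and a clopen U with 1_U - frac(theta) 1 a real coboundary
  (Theta does not depend on the choice of U).\<close>
definition in_Theta_image :: "'a::metric_space set \<Rightarrow> ('a \<Rightarrow> 'a) \<Rightarrow> ('a \<Rightarrow> int) \<Rightarrow> bool" where
  "in_Theta_image X T f \<longleftrightarrow>
     (\<exists>\<theta>\<in>eigen_group X T. \<exists>U. clopen_in X U \<and>
        real_coboundary X T (\<lambda>x. indicator U x - frac \<theta>) \<and>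
        K0_eq X T f (\<lambda>x. \<lfloor>\<theta>\<rfloor> + indicator U x))"

end

theory Submission
  imports Defs
begin

text \<open>If \<open>n[f] = \<Theta>(\<theta>)\<close>, then \<open>n f - \<theta>\<close> is a real coboundary, hence so is \<open>f - \<theta>/n\<close>, and
  \<open>exp (2\<pi>i\<theta>/n)\<close> is a continuous eigenvalue with eigenfunction \<open>exp (2\<pi>i F)\<close> for a
  transfer function \<open>F\<close>. So it suffices to show: if \<open>g\<close> is continuous integer-valued,
  \<open>0 \<le> t < 1\<close> and \<open>g - t = F - F \<circ> T\<close> with \<open>F\<close> continuous, then there is a clopen \<open>U\<close> with
  \<open>1\<^sub>U - t\<close> a real and \<open>g - 1\<^sub>U\<close> an integer coboundary. For this pick a clopen \<open>A\<close> on which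
  \<open>F\<close> oscillates by less than \<open>1 - t\<close> (possible as \<open>X\<close> is totally disconnected), let \<open>e(x)\<close>
  be the first time the backward orbit of \<open>x\<close> enters \<open>A\<close> (finite and locally constant by
  minimality), and set \<open>\<psi>(x) = F(S\<^sup>e x) + {e t}\<close> with \<open>S = T\<^sup>-\<^sup>1\<close> and \<open>e = e(x)\<close>. Then
  \<open>K = F - \<psi>\<close> is a continuous integer-valued function, so \<open>\<psi> - \<psi> \<circ> T + t = g - K + K \<circ> T\<close> is
  integer-valued; comparing \<open>e(x)\<close> with \<open>e(T x)\<close> shows that it takes values in \<open>(-1, 2)\<close>,
  so it is \<open>1\<^sub>U\<close> for a clopen \<open>U\<close>.\<close>

lemma funpow_image_subset:
  assumes "S ` X \<subseteq> X"
  shows "(S ^^ m) ` X \<subseteq> X"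
  by (induction m) (use assms in auto)

lemma continuous_on_funpow:
  assumes "continuous_on X S" "S ` X \<subseteq> X"
  shows "continuous_on X (S ^^ m)"
proof (induction m)
  case (Suc m)
  have "continuous_on X (S \<circ> S ^^ m)"
    using Suc funpow_image_subset[OF assms(2)]
    by (intro continuous_on_compose) (auto intro: continuous_on_subset[OF assms(1)])
  then show ?case by simp
qed (simp add: continuous_on_id)

lemma homeomorphism_funpow:
  assumes "homeomorphism X X T S"
  shows "homeomorphism X X (T ^^ m) (S ^^ m)"
proof (induction m)
  case 0
  show ?case using homeomorphism_ident[of X] by (simp add: id_def)
next
  case (Suc m)
  show ?case
    using homeomorphism_compose[OF assms Suc] by (simp add: o_def funpow_swap1)
qed

lemma clopen_in_preimage:
  assumes "continuous_on X f" "f ` X \<subseteq> Y" "clopen_in Y A"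
  shows "clopen_in X (X \<inter> f -` A)"
  using assms continuous_openin_preimage[of X f Y A] continuous_closedin_preimage_gen[of X f Y A]
  unfolding clopen_in_def by (auto simp: image_subset_iff_funcset)

lemma cantor_set_clopen_nbhd:
  fixes X :: "'a::metric_space set"
  assumes X: "cantor_set X" and "x \<in> X" and W: "openin (top_of_set X) W" "x \<in> W"
  obtains A where "clopen_in X A" "x \<in> A" "A \<subseteq> W"
proof -
  let ?X = "top_of_set X"
  have "connected_component_of_set ?X x = {x}"
  proof -
    have "connected (connected_component_of_set ?X x)" "connected_component_of_set ?X x \<subseteq> X"
      using connectedin_connected_component_of[of ?X x] by (auto simp: connectedin_subtopology)
    moreover have "x \<in> connected_component_of_set ?X x"
      using \<open>x \<in> X\<close> by (simp add: connected_component_of_refl)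
    ultimately show ?thesis using X unfolding cantor_set_def by blast
  qed
  then have "{x} \<in> connected_components_of ?X"
    using connected_component_in_connected_components_of[of ?X x] \<open>x \<in> X\<close> by simp
  moreover have "locally_compact_space ?X"
    using X by (intro compact_imp_locally_compact_space) (simp add: cantor_set_def compact_space_subtopology)
  ultimately obtain U V where UV: "openin ?X U" "openin ?X V" "disjnt U V" "U \<union> V = X"
    "x \<in> U" "U \<subseteq> W"
    using wilder_locally_compact_component_thm[of ?X "{x}" W] W \<open>x \<in> X\<close>
    by (auto simp: Hausdorff_space_subtopology)
  then have "U = X - V"
    by (auto simp: disjnt_def)
  then have "closedin ?X U"
    using UV(2) by auto
  then show ?thesis
    using that UV unfolding clopen_in_def by auto
qed

lemma cantor_set_clopen_small_oscillation:
  fixes X :: "'a::metric_space set" and F :: "'a \<Rightarrow> real"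
  assumes X: "cantor_set X" and F: "continuous_on X F" and "\<epsilon> > 0"
  obtains A where "clopen_in X A" "A \<noteq> {}" "\<forall>y\<in>A. \<forall>z\<in>A. \<bar>F y - F z\<bar> < \<epsilon>"
proof -
  obtain x0 where "x0 \<in> X"
    using X by (auto simp: cantor_set_def)
  define W where "W = X \<inter> F -` ball (F x0) (\<epsilon> / 2)"
  have "openin (top_of_set X) W" "x0 \<in> W"
    using continuous_openin_preimage_gen[OF F] \<open>x0 \<in> X\<close> \<open>\<epsilon> > 0\<close> by (auto simp: W_def)
  then obtain A where A: "clopen_in X A" "x0 \<in> A" "A \<subseteq> W"
    using cantor_set_clopen_nbhd[OF X \<open>x0 \<in> X\<close>] by blast
  have "\<bar>F y - F z\<bar> < \<epsilon>" if "y \<in> A" "z \<in> A" for y z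
  proof -
    have "dist (F y) (F x0) < \<epsilon> / 2" "dist (F z) (F x0) < \<epsilon> / 2"
      using A(3) that by (auto simp: W_def dist_commute)
    then show ?thesis
      using dist_triangle_half_l by (metis dist_real_def)
  qed
  then show ?thesis
    using that A by blast
qed

lemma clopen_in_level_set:
  assumes "continuous_on X D" "\<forall>x\<in>X. D x = 0 \<or> D x = (1::real)"
  shows "clopen_in X {x \<in> X. D x = 1}"
proof -
  have "{x \<in> X. D x = 1} = X \<inter> D -` {1/2<..}" "{x \<in> X. D x = 1} = X \<inter> D -` {1/2..}"
    using assms(2) by force+
  then show ?thesis
    unfolding clopen_in_def
    using continuous_openin_preimage_gen[OF assms(1), of "{1/2<..}"]
      continuous_closedin_preimage[OF assms(1), of "{1/2..}"]
    by simp
qed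

subsection \<open>First entry times\<close>

lemma orbit_segment_meets_openin:
  fixes X :: "'a::metric_space set"
  assumes "compact X" and hom: "homeomorphism X X T S"
    and minimal: "\<forall>x\<in>X. X \<subseteq> closure (full_orbit T S x)"
    and A: "openin (top_of_set X) A" "A \<noteq> {}"
  obtains N where "\<forall>y\<in>X. \<exists>m<N. (T ^^ m) y \<in> A \<or> (S ^^ m) y \<in> A"
proof -
  obtain B where B: "open B" "A = X \<inter> B"
    using A(1) by (auto simp: openin_open)
  define C where "C m = (T ^^ m) -` B \<union> (S ^^ m) -` B" for m
  have "\<forall>m. \<exists>V. open V \<and> X \<inter> C m = X \<inter> V"
  proof
    fix m
    have "openin (top_of_set X) (X \<inter> C m)"
      unfolding C_def Int_Un_distrib
      using homeomorphism_funpow[OF hom, of m] B(1)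
      by (intro openin_Un continuous_openin_preimage_gen) (auto simp: homeomorphism_def)
    then show "\<exists>V. open V \<and> X \<inter> C m = X \<inter> V"
      by (auto simp: openin_open)
  qed
  then obtain V where V: "\<And>m. open (V m)" "\<And>m. X \<inter> C m = X \<inter> V m"
    by metis
  have "X \<subseteq> (\<Union>m. V m)"
  proof
    fix y assume "y \<in> X"
    obtain a where "a \<in> A"
      using A(2) by blast
    then have "a \<in> closure (full_orbit T S y)"
      using minimal \<open>y \<in> X\<close> B(2) by blast
    then have "B \<inter> full_orbit T S y \<noteq> {}"
      using B \<open>a \<in> A\<close> open_Int_closure_eq_empty[OF B(1)] by blast
    then obtain m where "y \<in> C m"
      unfolding full_orbit_def C_def by blast
    then show "y \<in> (\<Union>m. V m)"
      using V(2)[of m] \<open>y \<in> X\<close> by blast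
  qed
  then obtain J where "finite J" "X \<subseteq> (\<Union>m\<in>J. V m)"
    using compactE_image[OF \<open>compact X\<close>, of UNIV V] V(1) by auto
  moreover obtain N where "J \<subseteq> {..<N}"
    using finite_nat_bounded[OF \<open>finite J\<close>] by blast
  ultimately have C_hit: "\<forall>y\<in>X. \<exists>m<N. y \<in> C m"
    using V(2) by blast
  have "\<exists>m<N. (T ^^ m) y \<in> A \<or> (S ^^ m) y \<in> A" if "y \<in> X" for y
  proof -
    obtain m where "m < N" "y \<in> C m"
      using C_hit \<open>y \<in> X\<close> by blast
    then have "(T ^^ m) y \<in> B \<or> (S ^^ m) y \<in> B"
      unfolding C_def by simp
    moreover have "(T ^^ m) y \<in> X" "(S ^^ m) y \<in> X"
      using homeomorphism_funpow[OF hom, of m] \<open>y \<in> X\<close> by (auto simp: homeomorphism_def)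
    ultimately show ?thesis
      unfolding B(2) using \<open>m < N\<close> by blast
  qed
  then show ?thesis
    using that by blast
qed

text \<open>Apply the uniform bound at \<open>(S ^^ N) x\<close>: a forward hit after \<open>m < N\<close> steps is a
  backward hit of \<open>x\<close> after \<open>N - m\<close> steps.\<close>

lemma backward_orbit_meets_openin:
  fixes X :: "'a::metric_space set"
  assumes "compact X" and hom: "homeomorphism X X T S"
    and minimal: "\<forall>x\<in>X. X \<subseteq> closure (full_orbit T S x)"
    and A: "openin (top_of_set X) A" "A \<noteq> {}" and "x \<in> X"
  shows "\<exists>j. (S ^^ j) x \<in> A"
proof -
  have hom_m: "homeomorphism X X (T ^^ m) (S ^^ m)" for m
    by (rule homeomorphism_funpow[OF hom])
  obtain N where N: "\<forall>y\<in>X. \<exists>m<N. (T ^^ m) y \<in> A \<or> (S ^^ m) y \<in> A"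
    using orbit_segment_meets_openin[OF assms(1-5)] by blast
  have "(S ^^ N) x \<in> X"
    using homeomorphism_image2[OF hom_m[of N]] \<open>x \<in> X\<close> by blast
  then obtain m where "m < N" and "(T ^^ m) ((S ^^ N) x) \<in> A \<or> (S ^^ m) ((S ^^ N) x) \<in> A"
    using N by blast
  moreover have "(T ^^ m) ((S ^^ N) x) = (S ^^ (N - m)) x"
  proof -
    have "(S ^^ N) x = (S ^^ m) ((S ^^ (N - m)) x)"
      using \<open>m < N\<close> funpow_add[of m "N - m" S] by simp
    moreover have "(S ^^ (N - m)) x \<in> X"
      using homeomorphism_image2[OF hom_m[of "N - m"]] \<open>x \<in> X\<close> by blast
    ultimately show ?thesis
      using homeomorphism_apply2[OF hom_m[of m]] by simp
  qed
  moreover have "(S ^^ m) ((S ^^ N) x) = (S ^^ (m + N)) x"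
    by (simp add: funpow_add)
  ultimately have "(S ^^ (N - m)) x \<in> A \<or> (S ^^ (m + N)) x \<in> A"
    by simp
  then show ?thesis
    by blast
qed

definition entry_time :: "('a \<Rightarrow> 'a) \<Rightarrow> 'a set \<Rightarrow> 'a \<Rightarrow> nat" where
  "entry_time S A x = (LEAST j. (S ^^ j) x \<in> A)"

lemma entry_time_in:
  "\<exists>j. (S ^^ j) x \<in> A \<Longrightarrow> (S ^^ entry_time S A x) x \<in> A"
  unfolding entry_time_def by (rule LeastI_ex)

lemma entry_time_eqI:
  assumes "(S ^^ m) x \<in> A" "\<And>i. i < m \<Longrightarrow> (S ^^ i) x \<notin> A"
  shows "entry_time S A x = m"
  unfolding entry_time_def using assms by (intro Least_equality) (auto simp: not_less[symmetric])

lemma entry_time_eq_0: "x \<in> A \<Longrightarrow> entry_time S A x = 0"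
  by (rule entry_time_eqI) auto

lemma entry_time_Suc:
  assumes "\<exists>j. (S ^^ j) y \<in> A" "y \<notin> A"
  shows "entry_time S A y = Suc (entry_time S A (S y))"
proof -
  obtain j where "(S ^^ j) y \<in> A"
    using assms(1) by blast
  then have "entry_time S A y = Suc (LEAST j. (S ^^ Suc j) y \<in> A)"
    unfolding entry_time_def using assms(2) by (intro Least_Suc[where P = "\<lambda>j. (S ^^ j) y \<in> A"]) auto
  then show ?thesis
    by (simp only: entry_time_def funpow_Suc_right o_def)
qed

lemma entry_time_eq_iff:
  assumes "\<exists>j. (S ^^ j) x \<in> A"
  shows "entry_time S A x = m \<longleftrightarrow> (S ^^ m) x \<in> A \<and> (\<forall>i<m. (S ^^ i) x \<notin> A)"
proof
  assume "entry_time S A x = m"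
  then show "(S ^^ m) x \<in> A \<and> (\<forall>i<m. (S ^^ i) x \<notin> A)"
    using entry_time_in[OF assms] not_less_Least[where P = "\<lambda>j. (S ^^ j) x \<in> A"]
    unfolding entry_time_def by blast
qed (auto intro: entry_time_eqI)

text \<open>The first entry time into a clopen set is locally constant.\<close>

lemma continuous_on_entry_time_select:
  assumes S: "continuous_on X S" "S ` X \<subseteq> X" and A: "clopen_in X A"
    and hits: "\<forall>x\<in>X. \<exists>j. (S ^^ j) x \<in> A"
    and \<phi>: "\<And>m. continuous_on X (\<phi> m)"
  shows "continuous_on X (\<lambda>x. \<phi> (entry_time S A x) x)"
proof -
  define P where "P m = {x \<in> X. entry_time S A x = m}" for m
  have hit_clopen: "clopen_in X (X \<inter> (S ^^ i) -` A)" for i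
    using clopen_in_preimage[OF continuous_on_funpow[OF S] funpow_image_subset[OF S(2)] A] .
  have "x \<in> P m \<longleftrightarrow> x \<in> X \<and> (S ^^ m) x \<in> A \<and> (\<forall>i<m. (S ^^ i) x \<notin> A)" for x m
    using entry_time_eq_iff[of S x A m] hits unfolding P_def by auto
  then have "P m = (X \<inter> (S ^^ m) -` A) - (\<Union>i<m. X \<inter> (S ^^ i) -` A)" for m
    by auto
  moreover have "closedin (top_of_set X) (\<Union>i<m. X \<inter> (S ^^ i) -` A)" for m
    using hit_clopen unfolding clopen_in_def by (intro closedin_Union) auto
  ultimately have P_open: "openin (top_of_set X) (P m)" for m
    using hit_clopen unfolding clopen_in_def by (metis openin_diff)
  have "continuous_map (top_of_set X) euclidean (\<lambda>x. \<phi> (entry_time S A x) x)"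
  proof (rule pasting_lemma[where I = UNIV and T = P and f = \<phi>])
    fix m
    show "openin (top_of_set X) (P m)"
      by (rule P_open)
    have "continuous_on (P m) (\<phi> m)"
      by (rule continuous_on_subset[OF \<phi>]) (auto simp: P_def)
    then show "continuous_map (subtopology (top_of_set X) (P m)) euclidean (\<phi> m)"
      using openin_subset[OF P_open[of m]] by (simp add: subtopology_subtopology Int_absorb1)
  next
    fix i j x
    assume "x \<in> topspace (top_of_set X) \<inter> P i \<inter> P j"
    then show "\<phi> i x = \<phi> j x"
      by (auto simp: P_def)
  next
    fix x
    assume "x \<in> topspace (top_of_set X)"
    then show "\<exists>j. j \<in> UNIV \<and> x \<in> P j \<and> \<phi> (entry_time S A x) x = \<phi> j x"
      by (simp add: P_def)
  qed
  then show ?thesis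
    by simp
qed

subsection \<open>Reducing an integer-minus-constant coboundary to an indicator\<close>

lemma coboundary_backward_sum_in_Ints:
  assumes hom: "homeomorphism X X T S"
    and cob: "\<forall>x\<in>X. of_int (g x) - t = F x - F (T x)" and "x \<in> X"
  shows "F x - F ((S ^^ j) x) - real j * t \<in> \<int>"
proof (induction j)
  case (Suc j)
  define w where "w = (S ^^ j) x"
  have "w \<in> X"
    using homeomorphism_image2[OF homeomorphism_funpow[OF hom]] \<open>x \<in> X\<close> w_def by blast
  then have "S w \<in> X" "T (S w) = w"
    using hom by (auto simp: homeomorphism_def)
  then have "F w - F (S w) = t - of_int (g (S w))"
    using cob by force
  then have "F x - F ((S ^^ Suc j) x) - real (Suc j) * t
      = (F x - F ((S ^^ j) x) - real j * t) - of_int (g (S w))"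
    by (simp add: w_def algebra_simps)
  also have "\<dots> \<in> \<int>"
    using Suc Ints_of_int by (rule Ints_diff)
  finally show ?case .
qed simp

definition first_entry_transfer ::
    "('a \<Rightarrow> real) \<Rightarrow> real \<Rightarrow> ('a \<Rightarrow> 'a) \<Rightarrow> 'a set \<Rightarrow> 'a \<Rightarrow> real" where
  "first_entry_transfer F t S A x =
     F ((S ^^ entry_time S A x) x) + frac (real (entry_time S A x) * t)"

lemma continuous_on_first_entry_transfer:
  assumes F: "continuous_on X F" and S: "continuous_on X S" "S ` X \<subseteq> X"
    and "clopen_in X A" "\<forall>x\<in>X. \<exists>j. (S ^^ j) x \<in> A"
  shows "continuous_on X (first_entry_transfer F t S A)"
  unfolding first_entry_transfer_def
  using funpow_image_subset[OF S(2)]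
  by (intro continuous_on_entry_time_select[OF S assms(4,5),
        where \<phi> = "\<lambda>m x. F ((S ^^ m) x) + frac (real m * t)"]
      continuous_intros continuous_on_compose2[OF F continuous_on_funpow[OF S]]) auto

lemma first_entry_transfer_diff_in_Ints:
  assumes "homeomorphism X X T S" "\<forall>x\<in>X. of_int (g x) - t = F x - F (T x)" "x \<in> X"
  shows "F x - first_entry_transfer F t S A x \<in> \<int>"
proof -
  have "F x - first_entry_transfer F t S A x
      = (F x - F ((S ^^ entry_time S A x) x) - real (entry_time S A x) * t)
        + of_int \<lfloor>real (entry_time S A x) * t\<rfloor>"
    unfolding first_entry_transfer_def frac_def by simp
  also have "\<dots> \<in> \<int>"
    using coboundary_backward_sum_in_Ints[OF assms] by (intro Ints_add) auto
  finally show ?thesis .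
qed

lemma first_entry_transfer_step_bounds:
  fixes t :: real
  assumes t: "0 \<le> t" "t < 1" and "S (T x) = x" and hits: "\<exists>j. (S ^^ j) (T x) \<in> A"
    and osc: "\<forall>y\<in>A. \<forall>z\<in>A. \<bar>F y - F z\<bar> < 1 - t"
    and "(S ^^ entry_time S A x) x \<in> A"
  defines "\<psi> \<equiv> first_entry_transfer F t S A"
  shows "-1 < \<psi> x - \<psi> (T x) + t \<and> \<psi> x - \<psi> (T x) + t < 2"
proof (cases "T x \<in> A")
  case True
  then have "\<psi> x - \<psi> (T x) + t
      = (F ((S ^^ entry_time S A x) x) - F (T x)) + frac (real (entry_time S A x) * t) + t"
    by (simp add: \<psi>_def first_entry_transfer_def entry_time_eq_0)
  moreover have "\<bar>F ((S ^^ entry_time S A x) x) - F (T x)\<bar> < 1 - t"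
    using osc True assms(6) by blast
  moreover have "0 \<le> frac (real (entry_time S A x) * t)" "frac (real (entry_time S A x) * t) < 1"
    by (auto simp: frac_lt_1)
  ultimately show ?thesis
    using t unfolding abs_less_iff by (intro conjI; elim conjE; linarith)
next
  case False
  then have "entry_time S A (T x) = Suc (entry_time S A x)"
    using entry_time_Suc[OF hits] \<open>S (T x) = x\<close> by simp
  then have "\<psi> x - \<psi> (T x) + t
      = frac (real (entry_time S A x) * t) - frac (real (Suc (entry_time S A x)) * t) + t"
    by (simp add: \<psi>_def first_entry_transfer_def funpow_swap1 \<open>S (T x) = x\<close>)
  moreover have "0 \<le> frac (real (entry_time S A x) * t)" "frac (real (entry_time S A x) * t) < 1"
    "0 \<le> frac (real (Suc (entry_time S A x)) * t)" "frac (real (Suc (entry_time S A x)) * t) < 1"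
    by (auto simp: frac_lt_1)
  ultimately show ?thesis
    using t by linarith
qed

lemma int_minus_frac_coboundary_transfer:
  fixes X :: "'a::metric_space set" and F :: "'a \<Rightarrow> real"
  assumes "cantor_minimal_system X T" and t: "0 \<le> t" "t < 1"
    and F: "continuous_on X F" and cob: "\<forall>x\<in>X. of_int (g x) - t = F x - F (T x)"
  obtains \<psi> K where "continuous_on X \<psi>" "int_cont X K"
    "\<And>x. x \<in> X \<Longrightarrow> \<psi> x - \<psi> (T x) + t = of_int (g x - K x + K (T x))"
    "\<And>x. x \<in> X \<Longrightarrow> -1 < \<psi> x - \<psi> (T x) + t \<and> \<psi> x - \<psi> (T x) + t < 2"
proof -
  obtain S where X: "cantor_set X" and hom: "homeomorphism X X T S"
    and minimal: "\<forall>x\<in>X. X \<subseteq> closure (full_orbit T S x)"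
    using assms(1) unfolding cantor_minimal_system_def by blast
  have S: "continuous_on X S" "S ` X \<subseteq> X" and TX: "\<And>x. x \<in> X \<Longrightarrow> T x \<in> X"
    and ST: "\<And>x. x \<in> X \<Longrightarrow> S (T x) = x"
    using hom by (auto simp: homeomorphism_def)
  obtain A where A: "clopen_in X A" "A \<noteq> {}" and osc: "\<forall>y\<in>A. \<forall>z\<in>A. \<bar>F y - F z\<bar> < 1 - t"
    using cantor_set_clopen_small_oscillation[OF X F, of "1 - t"] t by auto
  have hits: "\<forall>x\<in>X. \<exists>j. (S ^^ j) x \<in> A"
    using backward_orbit_meets_openin[OF _ hom minimal] A X
    by (auto simp: clopen_in_def cantor_set_def)
  define \<psi> where "\<psi> = first_entry_transfer F t S A"
  have \<psi>_cont: "continuous_on X \<psi>"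
    unfolding \<psi>_def by (rule continuous_on_first_entry_transfer[OF F S A(1) hits])
  define K where "K x = \<lfloor>F x - \<psi> x\<rfloor>" for x
  have K: "of_int (K x) = F x - \<psi> x" if "x \<in> X" for x
    using first_entry_transfer_diff_in_Ints[OF hom cob that] unfolding K_def \<psi>_def
    by (metis Ints_cases floor_of_int)
  have "int_cont X K"
    unfolding int_cont_def using continuous_on_diff[OF F \<psi>_cont]
    by (rule continuous_on_cong[THEN iffD1, rotated 2]) (auto simp: K)
  moreover have "\<psi> x - \<psi> (T x) + t = of_int (g x - K x + K (T x))" if "x \<in> X" for x
    using K[OF that] K[OF TX[OF that]] cob that by auto
  moreover have "-1 < \<psi> x - \<psi> (T x) + t \<and> \<psi> x - \<psi> (T x) + t < 2" if "x \<in> X" for x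
  proof -
    have "\<exists>j. (S ^^ j) (T x) \<in> A"
      using hits TX[OF that] by blast
    moreover have "(S ^^ entry_time S A x) x \<in> A"
      using hits that by (intro entry_time_in) blast
    ultimately show ?thesis
      unfolding \<psi>_def
      by (rule first_entry_transfer_step_bounds[where F = F and S = S and T = T and x = x,
            OF t ST[OF that] _ osc])
  qed
  ultimately show ?thesis
    using that \<psi>_cont by blast
qed

text \<open>Existence of the clopen sets \<open>U\<^sub>t\<close> used to define \<open>\<Theta>\<close>.\<close>

lemma clopen_coboundary_of_int_minus_frac:
  fixes X :: "'a::metric_space set"
  assumes "cantor_minimal_system X T" and "0 \<le> t" "t < 1"
    and "real_coboundary X T (\<lambda>x. of_int (g x) - t)"
  obtains U where "clopen_in X U" "real_coboundary X T (\<lambda>x. indicator U x - t)"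
    "int_coboundary X T (\<lambda>x. g x - indicator U x)"
proof -
  obtain F where "continuous_on X F" "\<forall>x\<in>X. of_int (g x) - t = F x - F (T x)"
    using assms(4) unfolding real_coboundary_def by blast
  then obtain \<psi> K where \<psi>: "continuous_on X \<psi>" and K: "int_cont X K"
    and D_int: "\<And>x. x \<in> X \<Longrightarrow> \<psi> x - \<psi> (T x) + t = of_int (g x - K x + K (T x))"
    and D_bounds: "\<And>x. x \<in> X \<Longrightarrow> -1 < \<psi> x - \<psi> (T x) + t \<and> \<psi> x - \<psi> (T x) + t < 2"
    using int_minus_frac_coboundary_transfer[OF assms(1-3)] by metis
  define D where "D x = \<psi> x - \<psi> (T x) + t" for x
  have D01: "D x = 0 \<or> D x = 1" if "x \<in> X" for x
  proof -
    define k where "k = g x - K x + K (T x)"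
    have "D x = of_int k"
      using D_int[OF that] by (simp add: D_def k_def)
    moreover have "-1 < real_of_int k" "real_of_int k < 2"
      using D_bounds[OF that] \<open>D x = of_int k\<close> by (simp_all add: D_def)
    then have "-1 < k" "k < 2"
      using of_int_less_iff[of "-1" k] by simp_all
    then have "k = 0 \<or> k = 1"
      by presburger
    ultimately show ?thesis
      by auto
  qed
  have T: "continuous_on X T" "T ` X \<subseteq> X"
    using assms(1) unfolding cantor_minimal_system_def homeomorphism_def by auto
  define U where "U = {x \<in> X. D x = 1}"
  have U: "indicator U x = D x" if "x \<in> X" for x
    using D01[OF that] that by (auto simp: U_def indicator_def)
  have "continuous_on X D"
    unfolding D_def using T by (intro continuous_intros \<psi> continuous_on_compose2[OF \<psi>]) auto
  then have "clopen_in X U"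
    unfolding U_def using D01 by (intro clopen_in_level_set) auto
  moreover have "real_coboundary X T (\<lambda>x. indicator U x - t)"
    unfolding real_coboundary_def using \<psi> by (auto simp: U D_def)
  moreover have "int_coboundary X T (\<lambda>x. g x - indicator U x)"
    unfolding int_coboundary_def
  proof (intro exI[of _ K] conjI K ballI)
    fix x assume "x \<in> X"
    then have "real_of_int (g x - indicator U x) = real_of_int (K x - K (T x))"
      using U D_int unfolding D_def by (simp add: indicator_def split: if_splits)
    then show "g x - indicator U x = K x - K (T x)"
      by (simp only: of_int_eq_iff)
  qed
  ultimately show ?thesis
    using that by blast
qed

subsection \<open>The image of \<open>\<Theta>\<close>\<close>

lemma real_coboundary_add:
  assumes "real_coboundary X T f" "real_coboundary X T g"
  shows "real_coboundary X T (\<lambda>x. f x + g x)"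
proof -
  obtain F G where "continuous_on X F" "\<forall>x\<in>X. f x = F x - F (T x)"
    "continuous_on X G" "\<forall>x\<in>X. g x = G x - G (T x)"
    using assms unfolding real_coboundary_def by blast
  then show ?thesis
    unfolding real_coboundary_def
    by (intro exI[of _ "\<lambda>x. F x + G x"]) (auto intro: continuous_on_add)
qed

lemma real_coboundary_cmult:
  assumes "real_coboundary X T f"
  shows "real_coboundary X T (\<lambda>x. c * f x)"
proof -
  obtain F where "continuous_on X F" "\<forall>x\<in>X. f x = F x - F (T x)"
    using assms unfolding real_coboundary_def by blast
  then show ?thesis
    unfolding real_coboundary_def
    by (intro exI[of _ "\<lambda>x. c * F x"] conjI continuous_on_mult_left) (auto simp: right_diff_distrib)
qed

lemma real_coboundary_of_int_coboundary:
  assumes "int_coboundary X T g"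
  shows "real_coboundary X T (\<lambda>x. of_int (g x))"
proof -
  obtain f where "int_cont X f" "\<forall>x\<in>X. g x = f x - f (T x)"
    using assms unfolding int_coboundary_def by blast
  then show ?thesis
    unfolding real_coboundary_def int_cont_def
    by (intro exI[of _ "\<lambda>x. of_int (f x)"]) auto
qed

text \<open>If \<open>f - \<theta>\<close> is the coboundary of \<open>F\<close>, then \<open>exp (2\<pi>i F)\<close> is an eigenfunction
  for \<open>exp (2\<pi>i \<theta>)\<close>, because \<open>f\<close> is integer-valued.\<close>

lemma mem_eigen_group_if_real_coboundary:
  assumes "real_coboundary X T (\<lambda>x. of_int (f x) - \<theta>)"
  shows "\<theta> \<in> eigen_group X T"
proof -
  obtain F where F: "continuous_on X F" "\<forall>x\<in>X. of_int (f x) - \<theta> = F x - F (T x)"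
    using assms unfolding real_coboundary_def by blast
  define e :: "real \<Rightarrow> complex" where "e s = exp (2 * of_real pi * \<i> * of_real s)" for s
  have e_add: "e (a + b) = e a * e b" for a b
    unfolding e_def by (simp add: distrib_left exp_add)
  have e_int: "e (of_int k) = 1" for k
    unfolding e_def using exp_integer_2pi[of "of_int k"] by (simp add: mult.commute mult.left_commute)
  have "e (F (T x)) = e \<theta> * e (F x)" if "x \<in> X" for x
  proof -
    have "F (T x) = \<theta> + F x + of_int (- f x)"
      using F(2) that by auto
    then show ?thesis
      by (simp only: e_add e_int mult_1_right)
  qed
  moreover have "continuous_on X (\<lambda>x. e (F x))"
    unfolding e_def by (intro continuous_intros F(1))
  moreover have "(\<lambda>x. e (F x)) ` X \<subseteq> sphere 0 1"
    by (auto simp: e_def norm_exp_i_times)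
  ultimately show ?thesis
    unfolding eigen_group_def continuous_eigenvalue_def e_def by blast
qed

lemma real_coboundary_if_in_Theta_image:
  assumes "in_Theta_image X T f"
  obtains \<theta> where "real_coboundary X T (\<lambda>x. of_int (f x) - \<theta>)"
proof -
  obtain \<theta> U where U: "real_coboundary X T (\<lambda>x. indicator U x - frac \<theta>)"
    and k: "int_coboundary X T (\<lambda>x. f x - (\<lfloor>\<theta>\<rfloor> + indicator U x))"
    using assms unfolding in_Theta_image_def K0_eq_def by blast
  have "real_coboundary X T (\<lambda>x. of_int (f x - (\<lfloor>\<theta>\<rfloor> + indicator U x)) + (indicator U x - frac \<theta>))"
    using real_coboundary_add[OF real_coboundary_of_int_coboundary[OF k] U] .
  then have "real_coboundary X T (\<lambda>x. of_int (f x) - \<theta>)"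
    by (simp add: frac_def indicator_def)
  then show ?thesis
    using that by blast
qed

lemma in_Theta_image_if_real_coboundary:
  fixes X :: "'a::metric_space set"
  assumes "cantor_minimal_system X T" "int_cont X f"
    and cob: "real_coboundary X T (\<lambda>x. of_int (f x) - \<theta>)"
  shows "in_Theta_image X T f"
proof -
  have "real_coboundary X T (\<lambda>x. of_int (f x - \<lfloor>\<theta>\<rfloor>) - frac \<theta>)"
    using cob by (simp add: frac_def)
  then obtain U where "clopen_in X U" "real_coboundary X T (\<lambda>x. indicator U x - frac \<theta>)"
    "int_coboundary X T (\<lambda>x. f x - \<lfloor>\<theta>\<rfloor> - indicator U x)"
    using clopen_coboundary_of_int_minus_frac[OF assms(1) frac_ge_0 frac_lt_1, where g = "\<lambda>x. f x - \<lfloor>\<theta>\<rfloor>"]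
    by blast
  moreover have "\<theta> \<in> eigen_group X T"
    using mem_eigen_group_if_real_coboundary[OF cob] .
  ultimately show ?thesis
    unfolding in_Theta_image_def K0_eq_def by (auto simp: algebra_simps)
qed

theorem mainTheorem6:
  fixes X :: "'a::metric_space set" and T :: "'a \<Rightarrow> 'a"
  assumes "cantor_minimal_system X T"
  shows "\<forall>f n. int_cont X f \<and> n > (0::int) \<and> in_Theta_image X T (\<lambda>x. n * f x)
            \<longrightarrow> in_Theta_image X T f"
proof (intro allI impI, elim conjE)
  fix f and n :: int
  assume "int_cont X f" "n > 0" "in_Theta_image X T (\<lambda>x. n * f x)"
  then obtain \<theta> where "real_coboundary X T (\<lambda>x. of_int (n * f x) - \<theta>)"
    using real_coboundary_if_in_Theta_image by blast
  then have "real_coboundary X T (\<lambda>x. (1 / of_int n) * (of_int (n * f x) - \<theta>))"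
    by (rule real_coboundary_cmult)
  moreover have "(1 / of_int n) * (of_int (n * f x) - \<theta>) = of_int (f x) - \<theta> / of_int n" for x
    using \<open>n > 0\<close> by (simp add: field_simps)
  ultimately have "real_coboundary X T (\<lambda>x. of_int (f x) - \<theta> / of_int n)"
    by simp
  then show "in_Theta_image X T f"
    using in_Theta_image_if_real_coboundary[OF assms \<open>int_cont X f\<close>] by blast
qed

end
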